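(* Let $G$ be a primitive permutation group on a finite set $\Omega$ of size $n>2$. Then (a) $G$ synchronizes every map $f:\Omega\to\Omega$ of rank $2$; (b) $G$ synchronizes every non-uniform map $f:\Omega\to\Omega$ of rank $3$ or $4$.
   Context: The rank of $f$ is $|\Omega f|$. $G$ synchronizes a non-invertible map $f$ if the semigroup $\langle G,f\rangle$ generated by $G$ and $f$ contains a constant map. The kernel of $f$ is the partition of $\Omega$ into the inverse images of points of the image of $f$; $f$ is uniform if all parts of its kernel have the same size, and non-uniform otherwise. *)

theory Defs
  imports "HOL-Combinatorics.Permutations"
begin

definition perm_group_on :: "'a set \<Rightarrow> ('a \<Rightarrow> 'a) set \<Rightarrow> bool" where
  "perm_group_on \<Omega> G \<longleftrightarrow> G \<noteq> {} \<and> (\<forall>g\<in>G. g permutes \<Omega>) \<and>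
     (\<forall>g\<in>G. \<forall>h\<in>G. g \<circ> h \<in> G) \<and> (\<forall>g\<in>G. inv g \<in> G)"

definition transitive_on :: "'a set \<Rightarrow> ('a \<Rightarrow> 'a) set \<Rightarrow> bool" where
  "transitive_on \<Omega> G \<longleftrightarrow> (\<forall>x\<in>\<Omega>. \<forall>y\<in>\<Omega>. \<exists>g\<in>G. g x = y)"

definition primitive_on :: "'a set \<Rightarrow> ('a \<Rightarrow> 'a) set \<Rightarrow> bool" where
  "primitive_on \<Omega> G \<longleftrightarrow> perm_group_on \<Omega> G \<and> transitive_on \<Omega> G \<and>
     (\<forall>R. equiv \<Omega> R \<and> (\<forall>g\<in>G. \<forall>x y. (x, y) \<in> R \<longrightarrow> (g x, g y) \<in> R)
          \<longrightarrow> R = Id_on \<Omega> \<or> R = \<Omega> \<times> \<Omega>)"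

inductive_set gen_semigroup :: "('a \<Rightarrow> 'a) set \<Rightarrow> ('a \<Rightarrow> 'a) \<Rightarrow> ('a \<Rightarrow> 'a) set"
  for G :: "('a \<Rightarrow> 'a) set" and f :: "'a \<Rightarrow> 'a" where
  gen_G: "g \<in> G \<Longrightarrow> g \<in> gen_semigroup G f"
| gen_f: "f \<in> gen_semigroup G f"
| gen_comp: "a \<in> gen_semigroup G f \<Longrightarrow> b \<in> gen_semigroup G f \<Longrightarrow> a \<circ> b \<in> gen_semigroup G f"

definition is_map_on :: "'a set \<Rightarrow> ('a \<Rightarrow> 'a) \<Rightarrow> bool" where
  "is_map_on \<Omega> f \<longleftrightarrow> f ` \<Omega> \<subseteq> \<Omega>"

definition constant_on_set :: "'a set \<Rightarrow> ('a \<Rightarrow> 'a) \<Rightarrow> bool" where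
  "constant_on_set \<Omega> h \<longleftrightarrow> (\<exists>c\<in>\<Omega>. \<forall>x\<in>\<Omega>. h x = c)"

definition map_rank :: "'a set \<Rightarrow> ('a \<Rightarrow> 'a) \<Rightarrow> nat" where
  "map_rank \<Omega> f = card (f ` \<Omega>)"

definition synchronizes :: "'a set \<Rightarrow> ('a \<Rightarrow> 'a) set \<Rightarrow> ('a \<Rightarrow> 'a) \<Rightarrow> bool" where
  "synchronizes \<Omega> G f \<longleftrightarrow> (\<exists>h\<in>gen_semigroup G f. constant_on_set \<Omega> h)"

definition kernel_of :: "'a set \<Rightarrow> ('a \<Rightarrow> 'a) \<Rightarrow> 'a set set" where
  "kernel_of \<Omega> f = (\<lambda>y. {x\<in>\<Omega>. f x = y}) ` (f ` \<Omega>)"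

definition uniform_map :: "'a set \<Rightarrow> ('a \<Rightarrow> 'a) \<Rightarrow> bool" where
  "uniform_map \<Omega> f \<longleftrightarrow> (\<forall>A\<in>kernel_of \<Omega> f. \<forall>B\<in>kernel_of \<Omega> f. card A = card B)"

end

theory Submission
  imports Defs
begin

text \<open>Let \<open>h\<close> have minimal rank in the semigroup generated by \<open>G\<close> and \<open>f\<close>. Then every
  \<open>h \<circ> g\<close> (\<open>g \<in> G\<close>) is injective on the image of \<open>h\<close>; double counting over \<open>G\<close> shows that
  all kernel classes of \<open>h\<close> have the same size, and primitivity shows that any two points are
  separated by some \<open>h \<circ> g\<close> unless \<open>h\<close> is constant.
  If \<open>h\<close> had rank 2 with image \<open>{a, b}\<close>, the \<open>G\<close>-orbit of the edge \<open>{a, b}\<close> would be an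
  invariant graph of maximal degree one, i.e.\ a block system with blocks of size two, which is
  impossible for \<open>n > 2\<close>. If \<open>h\<close> had rank 3 while \<open>f\<close> has rank 4, each \<open>h \<circ> g\<close> would identify
  exactly one pair of points of the image of \<open>f\<close>; uniformity of \<open>h \<circ> g \<circ> f\<close> shows that this
  pair does not depend on \<open>g\<close>, so it is never separated. Hence the minimal rank is 1, unless it
  equals the rank of \<open>f\<close>, in which case \<open>f\<close> itself is uniform.\<close>

lemma card_image_le_2_if_two_collisions:
  assumes C: "card C = 4" "{p, p', q, q'} \<subseteq> C" and ne: "p' \<noteq> p" "q' \<noteq> q"
    and collide: "\<phi> p' = \<phi> p" "\<phi> q' = \<phi> q" "\<phi> p \<noteq> \<phi> q"
  shows "card (\<phi> ` C) \<le> 2"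
proof -
  have "finite C" using C(1) by (intro card_ge_0_finite) simp
  moreover have "card {p, p', q, q'} = card C"
  proof -
    have "p \<noteq> q" "p \<noteq> q'" "p' \<noteq> q" "p' \<noteq> q'" using collide by metis+
    then show ?thesis using C(1) ne by simp
  qed
  ultimately have "{p, p', q, q'} = C" using C(2) by (intro card_subset_eq)
  then have "\<phi> ` C = {\<phi> p, \<phi> q}" using collide by auto
  then show ?thesis by (simp add: card_insert_le_m1)
qed

locale primitive_group =
  fixes \<Omega> :: "'a set" and G :: "('a \<Rightarrow> 'a) set"
  assumes finite_carrier: "finite \<Omega>" and primitive: "primitive_on \<Omega> G"
begin

lemma perm_group: "perm_group_on \<Omega> G"
  using primitive unfolding primitive_on_def by blast

lemma permutes: "g \<in> G \<Longrightarrow> g permutes \<Omega>"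
  using perm_group unfolding perm_group_on_def by blast

lemma comp_closed: "g \<in> G \<Longrightarrow> k \<in> G \<Longrightarrow> g \<circ> k \<in> G"
  using perm_group unfolding perm_group_on_def by blast

lemma id_in_group: "id \<in> G"
proof -
  obtain g where g: "g \<in> G" using perm_group unfolding perm_group_on_def by blast
  then have "inv g \<in> G" using perm_group unfolding perm_group_on_def by blast
  with g have "inv g \<circ> g \<in> G" by (simp add: comp_closed)
  then show ?thesis using permutes_inv_o(2)[OF permutes[OF g]] by simp
qed

lemma mem_carrier: "g \<in> G \<Longrightarrow> x \<in> \<Omega> \<Longrightarrow> g x \<in> \<Omega>"
  by (simp add: permutes_in_image[OF permutes])

lemma transporter_exists: "x \<in> \<Omega> \<Longrightarrow> y \<in> \<Omega> \<Longrightarrow> \<exists>g\<in>G. g x = y"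
  using primitive unfolding primitive_on_def transitive_on_def by blast

lemma invariant_equiv_trivial:
  assumes "equiv \<Omega> R" and "\<And>g x y. g \<in> G \<Longrightarrow> (x, y) \<in> R \<Longrightarrow> (g x, g y) \<in> R"
  shows "R = Id_on \<Omega> \<or> R = \<Omega> \<times> \<Omega>"
  using primitive assms unfolding primitive_on_def by blast

lemma finite_group: "finite G"
  by (rule finite_subset[OF _ finite_permutations[OF finite_carrier]]) (auto dest: permutes)

lemma card_transporters_le:
  assumes "a \<in> \<Omega>" "k \<in> \<Omega>" "a' \<in> \<Omega>" "k' \<in> \<Omega>"
  shows "card {g\<in>G. g a = k} \<le> card {g\<in>G. g a' = k'}"
proof -
  obtain v where v: "v \<in> G" "v a' = a" using transporter_exists assms by blast
  obtain u where u: "u \<in> G" "u k = k'" using transporter_exists assms by blast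
  have "inv u \<circ> (u \<circ> g \<circ> v) \<circ> inv v = g" for g
    using permutes_inverses[OF permutes[OF u(1)]] permutes_inverses[OF permutes[OF v(1)]]
    by (simp add: fun_eq_iff)
  then have "inj (\<lambda>g. u \<circ> g \<circ> v)"
    by (rule inj_on_inverseI[where g = "\<lambda>g. inv u \<circ> g \<circ> inv v"])
  moreover have "(\<lambda>g. u \<circ> g \<circ> v) ` {g\<in>G. g a = k} \<subseteq> {g\<in>G. g a' = k'}"
    using u v comp_closed by auto
  ultimately show ?thesis
    using finite_group by (intro card_inj_on_le) (auto intro: inj_on_subset)
qed

lemma card_transporters_eq:
  assumes "a \<in> \<Omega>" "k \<in> \<Omega>" "a' \<in> \<Omega>" "k' \<in> \<Omega>"
  shows "card {g\<in>G. g a = k} = card {g\<in>G. g a' = k'}"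
  using card_transporters_le[OF assms] card_transporters_le[OF assms(3,4,1,2)] by (rule antisym)

lemma sum_card_transported:
  assumes "A \<subseteq> \<Omega>" "K \<subseteq> \<Omega>" "a \<in> \<Omega>"
  shows "(\<Sum>g\<in>G. card {x\<in>A. g x \<in> K}) = card A * card K * card {g\<in>G. g a = a}"
proof -
  have fin: "finite A" "finite K"
    using assms finite_subset finite_carrier by auto
  have "(\<Sum>g\<in>G. card {x\<in>A. g x \<in> K}) = (\<Sum>g\<in>G. \<Sum>x\<in>A. \<Sum>k\<in>K. if g x = k then 1 else 0)"
    using fin by (intro sum.cong refl) (simp add: sum.inter_filter[symmetric])
  also have "\<dots> = (\<Sum>x\<in>A. \<Sum>k\<in>K. card {g\<in>G. g x = k})"
    using finite_group by (subst sum.swap, subst sum.swap) (simp add: sum.inter_filter[symmetric])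
  also have "\<dots> = (\<Sum>x\<in>A. \<Sum>k\<in>K. card {g\<in>G. g a = a})"
    using assms by (intro sum.cong refl card_transporters_eq) auto
  finally show ?thesis by simp
qed

lemma card_group_eq:
  assumes "a \<in> \<Omega>" shows "card G = card \<Omega> * card {g\<in>G. g a = a}"
proof -
  have "{x\<in>{a}. g x \<in> \<Omega>} = {a}" if "g \<in> G" for g
    using mem_carrier[OF that assms] by auto
  then show ?thesis using sum_card_transported[of "{a}" \<Omega> a] assms by simp
qed

lemma card_stabiliser_pos: "a \<in> \<Omega> \<Longrightarrow> 0 < card {g\<in>G. g a = a}"
  using id_in_group finite_group by (auto simp: card_gt_0_iff)

text \<open>Each \<open>s \<circ> g\<close> permutes the image of \<open>s\<close>, so every \<open>g\<close> maps exactly one point of the image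
  into a given fibre; counting these pairs \<open>(g, x)\<close> fixes the size of the fibre.\<close>
lemma card_image_mult_card_fibre:
  assumes s: "s ` \<Omega> \<subseteq> \<Omega>" and inj: "\<And>g. g \<in> G \<Longrightarrow> inj_on (s \<circ> g) (s ` \<Omega>)"
    and y: "y \<in> s ` \<Omega>"
  shows "card (s ` \<Omega>) * card {x\<in>\<Omega>. s x = y} = card \<Omega>"
proof -
  define A where "A = s ` \<Omega>"
  define K where "K = {x\<in>\<Omega>. s x = y}"
  have A_fin: "finite A" using finite_carrier A_def by simp
  have one: "card {x\<in>A. g x \<in> K} = 1" if g: "g \<in> G" for g
  proof -
    have "(s \<circ> g) ` A \<subseteq> A" using s mem_carrier[OF g] A_def by auto
    moreover have "card ((s \<circ> g) ` A) = card A"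
      using card_image inj[OF g] A_def by blast
    ultimately have "(s \<circ> g) ` A = A" using card_subset_eq[OF A_fin] by blast
    then obtain x1 where x1: "x1 \<in> A" "s (g x1) = y" using y A_def by (metis comp_apply imageE)
    have "{x\<in>A. g x \<in> K} = {x1}"
      using x1 inj[OF g] s mem_carrier[OF g] unfolding A_def K_def inj_on_def by auto
    then show ?thesis by simp
  qed
  obtain a where a: "a \<in> \<Omega>" using y by blast
  have "card \<Omega> * card {g\<in>G. g a = a} = card A * card K * card {g\<in>G. g a = a}"
    using sum_card_transported[of A K a] card_group_eq[OF a] one s a
    unfolding A_def K_def by auto
  then show ?thesis
    using card_stabiliser_pos[OF a] unfolding A_def K_def by simp
qed

lemma separating_element:
  assumes h: "2 \<le> card (h ` \<Omega>)" and xy: "x \<in> \<Omega>" "y \<in> \<Omega>" "x \<noteq> y"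
  obtains g where "g \<in> G" "h (g x) \<noteq> h (g y)"
proof -
  define R where "R = {(x, y). x \<in> \<Omega> \<and> y \<in> \<Omega> \<and> (\<forall>g\<in>G. h (g x) = h (g y))}"
  have "equiv \<Omega> R"
    by (rule equivI) (auto simp: R_def refl_on_def intro!: symI transI)
  moreover have "(k x, k y) \<in> R" if k: "k \<in> G" and xy: "(x, y) \<in> R" for k x y
  proof -
    have "h ((g \<circ> k) x) = h ((g \<circ> k) y)" if "g \<in> G" for g
      using xy comp_closed[OF that k] unfolding R_def by blast
    then show ?thesis using xy mem_carrier[OF k] unfolding R_def by simp
  qed
  ultimately have "R = Id_on \<Omega> \<or> R = \<Omega> \<times> \<Omega>" by (rule invariant_equiv_trivial)
  moreover have "R \<noteq> \<Omega> \<times> \<Omega>"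
  proof
    assume "R = \<Omega> \<times> \<Omega>"
    then have "\<forall>g\<in>G. h (g u) = h (g v)" if "u \<in> \<Omega>" "v \<in> \<Omega>" for u v
      using that unfolding R_def by blast
    then have "\<forall>u\<in>\<Omega>. \<forall>v\<in>\<Omega>. h u = h v"
      using id_in_group by fastforce
    then have "h ` \<Omega> = {h x}" using xy(1) by blast
    with h show False by simp
  qed
  ultimately have "(x, y) \<notin> R" using xy by auto
  then obtain g where "g \<in> G" "h (g x) \<noteq> h (g y)" using xy unfolding R_def by blast
  then show thesis by (rule that)
qed

text \<open>Together with the diagonal, \<open>E\<close> is an invariant equivalence relation other than the
  diagonal; primitivity makes it all of \<open>\<Omega> \<times> \<Omega>\<close>, which forces \<open>\<Omega> \<subseteq> {u, v}\<close>.\<close>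
lemma card_le_2_if_invariant_matching:
  assumes E: "E \<subseteq> \<Omega> \<times> \<Omega>" "sym E" "(u, v) \<in> E" "u \<noteq> v"
    and matching: "\<And>x y z. (y, x) \<in> E \<Longrightarrow> (y, z) \<in> E \<Longrightarrow> x = z"
    and invariant: "\<And>g x y. g \<in> G \<Longrightarrow> (x, y) \<in> E \<Longrightarrow> (g x, g y) \<in> E"
  shows "card \<Omega> \<le> 2"
proof -
  define M where "M = Id_on \<Omega> \<union> E"
  have "equiv \<Omega> M"
    using E matching unfolding M_def equiv_def refl_on_def sym_def trans_def
    by (auto simp: Id_on_def)
  moreover have "(g x, g y) \<in> M" if "g \<in> G" "(x, y) \<in> M" for g x y
    using that invariant mem_carrier unfolding M_def by auto
  ultimately have "M = Id_on \<Omega> \<or> M = \<Omega> \<times> \<Omega>" by (rule invariant_equiv_trivial)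
  moreover have "M \<noteq> Id_on \<Omega>" using E(3,4) unfolding M_def by (metis Id_onE UnI2 prod.inject)
  ultimately have "(u, c) \<in> M" if "c \<in> \<Omega>" for c
    using E that by auto
  then have "\<Omega> \<subseteq> {u, v}"
    using E(3) matching unfolding M_def by blast
  then have "card \<Omega> \<le> card {u, v}" by (simp add: card_mono)
  also have "\<dots> \<le> 2" by (simp add: card_insert_le_m1)
  finally show ?thesis .
qed

end

locale primitive_transformation_semigroup = primitive_group +
  fixes f :: "'a \<Rightarrow> 'a"
  assumes map_f: "is_map_on \<Omega> f"
begin

abbreviation S :: "('a \<Rightarrow> 'a) set" where
  "S \<equiv> gen_semigroup G f"

lemma gen_semigroup_image_subset: "s \<in> S \<Longrightarrow> s ` \<Omega> \<subseteq> \<Omega>"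
proof (induction rule: gen_semigroup.induct)
  case (gen_G g)
  then show ?case using mem_carrier by blast
next
  case gen_f
  then show ?case using map_f unfolding is_map_on_def .
next
  case (gen_comp a b)
  then show ?case by (auto simp: image_comp[symmetric])
qed

definition minimal_rank :: "('a \<Rightarrow> 'a) \<Rightarrow> bool" where
  "minimal_rank h \<longleftrightarrow> h \<in> S \<and> (\<forall>t\<in>S. card (h ` \<Omega>) \<le> card (t ` \<Omega>))"

lemma minimal_rank_exists: "\<exists>h. minimal_rank h"
  using ex_has_least_nat[of "\<lambda>s. s \<in> S" f "\<lambda>s. card (s ` \<Omega>)"] gen_semigroup.gen_f
  unfolding minimal_rank_def by blast

lemma synchronizes_if_minimal_rank_le_1:
  assumes h: "minimal_rank h" and "card (h ` \<Omega>) \<le> 1" and "\<Omega> \<noteq> {}"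
  shows "synchronizes \<Omega> G f"
proof -
  have "card (h ` \<Omega>) = 1" using assms finite_carrier by (simp add: le_Suc_eq)
  then obtain c where c: "h ` \<Omega> = {c}" by (rule card_1_singletonE)
  moreover have "c \<in> \<Omega>" using c gen_semigroup_image_subset h unfolding minimal_rank_def by blast
  ultimately show ?thesis using h unfolding synchronizes_def constant_on_set_def minimal_rank_def by blast
qed

lemma minimal_rank_inj_on_image:
  assumes h: "minimal_rank h" and g: "g \<in> G"
  shows "inj_on (h \<circ> g) (h ` \<Omega>)"
proof -
  have "h \<circ> g \<circ> h \<in> S"
    using h g unfolding minimal_rank_def by (blast intro: gen_semigroup.intros)
  moreover have "(h \<circ> g \<circ> h) ` \<Omega> = (h \<circ> g) ` h ` \<Omega>" by (simp add: image_comp)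
  ultimately have "card (h ` \<Omega>) \<le> card ((h \<circ> g) ` h ` \<Omega>)"
    using h unfolding minimal_rank_def by auto
  moreover have "card ((h \<circ> g) ` h ` \<Omega>) \<le> card (h ` \<Omega>)"
    by (rule card_image_le) (simp add: finite_carrier)
  ultimately show ?thesis
    by (intro eq_card_imp_inj_on) (simp_all add: finite_carrier)
qed

lemma minimal_rank_card_fibre:
  assumes "minimal_rank h" "y \<in> h ` \<Omega>"
  shows "card (h ` \<Omega>) * card {x\<in>\<Omega>. h x = y} = card \<Omega>"
  using assms card_image_mult_card_fibre minimal_rank_inj_on_image gen_semigroup_image_subset
  unfolding minimal_rank_def by blast

lemma minimal_rank_uniform:
  assumes "minimal_rank h" shows "uniform_map \<Omega> h"
proof -
  have "card {x\<in>\<Omega>. h x = y} = card {x\<in>\<Omega>. h x = y'}" if "y \<in> h ` \<Omega>" "y' \<in> h ` \<Omega>" for y y'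
  proof -
    have "card (h ` \<Omega>) \<noteq> 0" using that finite_carrier by auto
    moreover have "card (h ` \<Omega>) * card {x\<in>\<Omega>. h x = y} = card (h ` \<Omega>) * card {x\<in>\<Omega>. h x = y'}"
      using minimal_rank_card_fibre[OF assms that(1)] minimal_rank_card_fibre[OF assms that(2)]
      by simp
    ultimately show ?thesis by simp
  qed
  then show ?thesis unfolding uniform_map_def kernel_of_def by blast
qed

lemma minimal_rank_card_image_ne_2:
  assumes h: "minimal_rank h" and big: "2 < card \<Omega>"
  shows "card (h ` \<Omega>) \<noteq> 2"
proof
  assume rank_2: "card (h ` \<Omega>) = 2"
  then obtain a b where ab: "h ` \<Omega> = {a, b}" "a \<noteq> b" by (auto simp: card_2_iff)
  have ab_mem: "a \<in> \<Omega>" "b \<in> \<Omega>"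
    using ab gen_semigroup_image_subset h unfolding minimal_rank_def by auto
  txt \<open>Every \<open>h \<circ> g\<close> separates \<open>a\<close> from \<open>b\<close>, so in the orbit \<open>E\<close> of the edge \<open>{a, b}\<close> two
    neighbours of one vertex are never separated by any \<open>h \<circ> g\<close>, hence coincide.\<close>
  define E where "E = {(k a, k b) | k. k \<in> G} \<union> {(k b, k a) | k. k \<in> G}"
  have E_cases: "\<exists>k\<in>G. (x, y) = (k a, k b) \<or> (x, y) = (k b, k a)" if "(x, y) \<in> E" for x y
    using that unfolding E_def by blast
  have E_invariant: "(g x, g y) \<in> E" if g: "g \<in> G" and xy: "(x, y) \<in> E" for g x y
  proof -
    obtain k where k: "k \<in> G" "(x, y) = (k a, k b) \<or> (x, y) = (k b, k a)"
      using E_cases[OF xy] by blast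
    then have "(g x, g y) = ((g \<circ> k) a, (g \<circ> k) b) \<or> (g x, g y) = ((g \<circ> k) b, (g \<circ> k) a)"
      by auto
    then show ?thesis using comp_closed[OF g k(1)] unfolding E_def by blast
  qed
  have E_separated: "h (g x) \<noteq> h (g y)" if xy: "(x, y) \<in> E" and g: "g \<in> G" for g x y
  proof -
    obtain k where k: "k \<in> G" "(x, y) = (k a, k b) \<or> (x, y) = (k b, k a)"
      using E_cases[OF xy] by blast
    have "inj_on (h \<circ> (g \<circ> k)) {a, b}"
      using minimal_rank_inj_on_image[OF h comp_closed[OF g k(1)]] ab(1) by simp
    then show ?thesis using k(2) ab(2) unfolding inj_on_def by auto
  qed
  have E_sub: "E \<subseteq> \<Omega> \<times> \<Omega>" using ab_mem mem_carrier unfolding E_def by auto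
  have "x = z" if yx: "(y, x) \<in> E" and yz: "(y, z) \<in> E" for x y z
  proof (rule ccontr)
    assume "x \<noteq> z"
    moreover have xyz: "x \<in> \<Omega>" "y \<in> \<Omega>" "z \<in> \<Omega>" using yx yz E_sub by auto
    ultimately obtain g where g: "g \<in> G" "h (g x) \<noteq> h (g z)"
      using separating_element rank_2 by (metis le_refl)
    have "h (g w) \<in> {a, b}" if "w \<in> \<Omega>" for w
      using that ab(1) mem_carrier[OF g(1)] by blast
    then show False
      using xyz g E_separated[OF yx g(1)] E_separated[OF yz g(1)] by blast
  qed
  moreover have "sym E" unfolding E_def sym_def by blast
  moreover have "(id a, id b) \<in> E" using id_in_group unfolding E_def by blast
  ultimately have "card \<Omega> \<le> 2"
    using card_le_2_if_invariant_matching E_sub ab(2) E_invariant by simp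
  with big show False by simp
qed

lemma minimal_rank_3_imp_card_image_ne_4:
  assumes h: "minimal_rank h" and rank_3: "card (h ` \<Omega>) = 3"
  shows "card (f ` \<Omega>) \<noteq> 4"
proof
  assume rank_f: "card (f ` \<Omega>) = 4"
  define C where "C = f ` \<Omega>"
  have C_4: "card C = 4" using rank_f unfolding C_def .
  have C_sub: "C \<subseteq> \<Omega>" using map_f unfolding C_def is_map_on_def .
  have hgf: "h \<circ> g \<circ> f \<in> S" "(h \<circ> g \<circ> f) ` \<Omega> = (h \<circ> g) ` C" if "g \<in> G" for g
    using h that unfolding minimal_rank_def C_def by (auto intro: gen_semigroup.intros simp: image_comp)
  have rank_hg: "card ((h \<circ> g) ` C) = 3" if g: "g \<in> G" for g
  proof (rule antisym)
    have "(h \<circ> g) ` C \<subseteq> h ` \<Omega>" using C_sub mem_carrier[OF g] by auto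
    then show "card ((h \<circ> g) ` C) \<le> 3"
      using rank_3 card_mono[OF finite_imageI[OF finite_carrier]] by metis
    show "3 \<le> card ((h \<circ> g) ` C)" using h hgf[OF g] rank_3 unfolding minimal_rank_def by metis
  qed
  txt \<open>Whether \<open>h \<circ> g\<close> identifies \<open>c\<close> with another point of \<open>C\<close> depends only on the
    size of the fibre of \<open>f\<close> over \<open>c\<close>, not on \<open>g\<close>.\<close>
  define merged where "merged g c \<longleftrightarrow> (\<exists>c'\<in>C. c' \<noteq> c \<and> h (g c') = h (g c))" for g c
  have merged_iff: "merged g c \<longleftrightarrow> 3 * card {x\<in>\<Omega>. f x = c} < card \<Omega>"
    if g: "g \<in> G" and c: "c \<in> C" for g c
  proof -
    define F where "F = {x\<in>\<Omega>. h (g (f x)) = h (g c)}"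
    have "minimal_rank (h \<circ> g \<circ> f)"
      using h hgf[OF g] rank_hg[OF g] rank_3 unfolding minimal_rank_def by metis
    then have F_card: "3 * card F = card \<Omega>"
      using minimal_rank_card_fibre[of "h \<circ> g \<circ> f" "h (g c)"] hgf[OF g] rank_hg[OF g] c
      unfolding F_def by simp
    have sub: "{x\<in>\<Omega>. f x = c} \<subseteq> F" unfolding F_def by auto
    have "merged g c \<longleftrightarrow> {x\<in>\<Omega>. f x = c} \<noteq> F"
      unfolding merged_def F_def C_def by auto
    also have "\<dots> \<longleftrightarrow> card {x\<in>\<Omega>. f x = c} < card F"
    proof
      assume "{x\<in>\<Omega>. f x = c} \<noteq> F"
      moreover have "finite F" unfolding F_def using finite_carrier by simp
      ultimately show "card {x\<in>\<Omega>. f x = c} < card F" using sub by (intro psubset_card_mono) auto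
    qed auto
    finally show ?thesis using F_card by linarith
  qed
  have "\<not> inj_on (h \<circ> id) C" using rank_hg[OF id_in_group] C_4 card_image by fastforce
  then obtain p q where pq: "p \<in> C" "q \<in> C" "p \<noteq> q" "h p = h q"
    unfolding inj_on_def by auto
  have "merged id p" "merged id q" using pq unfolding merged_def by auto
  then have merged_pq: "merged g p" "merged g q" if "g \<in> G" for g
    using merged_iff[OF that] merged_iff[OF id_in_group] pq(1,2) by blast+
  have "h (g p) = h (g q)" if g: "g \<in> G" for g
  proof (rule ccontr)
    assume "h (g p) \<noteq> h (g q)"
    moreover obtain p' q' where p'q': "p' \<in> C" "p' \<noteq> p" "h (g p') = h (g p)"
      "q' \<in> C" "q' \<noteq> q" "h (g q') = h (g q)"
      using merged_pq[OF g] unfolding merged_def by blast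
    ultimately have "card ((h \<circ> g) ` C) \<le> 2"
      by (intro card_image_le_2_if_two_collisions[OF C_4, of p p' q q']) (use pq in simp_all)
    then show False using rank_hg[OF g] by simp
  qed
  moreover have "p \<in> \<Omega>" "q \<in> \<Omega>" using pq C_sub by auto
  ultimately show False
    using separating_element[of h p q] rank_3 pq(3) by auto
qed

lemma synchronizes_rank_2:
  assumes big: "2 < card \<Omega>" and rank_f: "map_rank \<Omega> f = 2"
  shows "synchronizes \<Omega> G f"
proof -
  obtain h where h: "minimal_rank h" using minimal_rank_exists by blast
  have "card (h ` \<Omega>) \<le> 2"
    using h gen_semigroup.gen_f rank_f unfolding minimal_rank_def map_rank_def by metis
  moreover have "card (h ` \<Omega>) \<noteq> 2" using minimal_rank_card_image_ne_2[OF h big] .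
  ultimately show ?thesis
    using synchronizes_if_minimal_rank_le_1[OF h] big by fastforce
qed

lemma synchronizes_non_uniform_rank_3_4:
  assumes big: "2 < card \<Omega>" and rank_f: "map_rank \<Omega> f \<in> {3, 4}"
    and non_uniform: "\<not> uniform_map \<Omega> f"
  shows "synchronizes \<Omega> G f"
proof -
  obtain h where h: "minimal_rank h" using minimal_rank_exists by blast
  have "card (h ` \<Omega>) \<le> card (f ` \<Omega>)"
    using h gen_semigroup.gen_f unfolding minimal_rank_def by blast
  moreover have "card (h ` \<Omega>) \<noteq> card (f ` \<Omega>)"
  proof
    assume "card (h ` \<Omega>) = card (f ` \<Omega>)"
    then have "minimal_rank f"
      using h gen_semigroup.gen_f unfolding minimal_rank_def by simp
    then show False using minimal_rank_uniform non_uniform by blast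
  qed
  moreover have "card (h ` \<Omega>) \<noteq> 2" using minimal_rank_card_image_ne_2[OF h big] .
  moreover have "card (h ` \<Omega>) = 3 \<Longrightarrow> card (f ` \<Omega>) \<noteq> 4"
    using minimal_rank_3_imp_card_image_ne_4[OF h] .
  ultimately show ?thesis
    using synchronizes_if_minimal_rank_le_1[OF h] big rank_f unfolding map_rank_def by fastforce
qed

end

theorem theorem4:
  fixes \<Omega> :: "'a set" and G :: "('a \<Rightarrow> 'a) set"
  assumes "finite \<Omega>" and "card \<Omega> > 2" and "primitive_on \<Omega> G"
  shows "(\<forall>f. is_map_on \<Omega> f \<and> map_rank \<Omega> f = 2 \<longrightarrow> synchronizes \<Omega> G f)
       \<and> (\<forall>f. is_map_on \<Omega> f \<and> map_rank \<Omega> f \<in> {3, 4} \<and> \<not> uniform_map \<Omega> f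
              \<longrightarrow> synchronizes \<Omega> G f)"
proof (intro conjI allI impI; elim conjE)
  fix f assume "is_map_on \<Omega> f" "map_rank \<Omega> f = 2"
  then interpret primitive_transformation_semigroup \<Omega> G f
    using assms by unfold_locales
  show "synchronizes \<Omega> G f" using synchronizes_rank_2 assms \<open>map_rank \<Omega> f = 2\<close> by blast
next
  fix f assume "is_map_on \<Omega> f" "map_rank \<Omega> f \<in> {3, 4}" "\<not> uniform_map \<Omega> f"
  then interpret primitive_transformation_semigroup \<Omega> G f
    using assms by unfold_locales
  show "synchronizes \<Omega> G f"
    using synchronizes_non_uniform_rank_3_4 assms \<open>map_rank \<Omega> f \<in> {3, 4}\<close> \<open>\<not> uniform_map \<Omega> f\<close>
    by blast
qed

end
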